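(* For $\delta, \rho \in (0,1/4)$, there exist $\nu, \nu' > 0$ depending only on $\delta,\rho$, and a finite set $\mathcal{K}$ of positive real numbers depending only on $\delta,\rho$, such that for every $n\ge 1$ and every $x \in \mathbb{S}^{n-1} \setminus \operatorname{Cons}(\delta,\rho)$, at least one of the following holds: (1) there exist $\kappa,\kappa' \in \mathcal{K}$ such that $|x_i| \le \kappa/\sqrt{n}$ for at least $\nu n$ indices $i \in [n]$, and $(\kappa+\nu')/\sqrt{n} < |x_i| \le \kappa'/\sqrt{n}$ for at least $\nu n$ indices $i\in[n]$; (2) there exist $\kappa,\kappa' \in \mathcal{K}$ such that $\kappa/\sqrt{n} < x_i < \kappa'/\sqrt{n}$ for at least $\nu n$ indices $i \in [n]$, and $-\kappa'/\sqrt{n} < x_i < -\kappa/\sqrt{n}$ for at least $\nu n$ indices $i\in[n]$.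
   Context: $\mathbb{S}^{n-1}$ is the Euclidean unit sphere in $\mathbb{R}^n$ and $[n]=\{1,\dots,n\}$. For $\delta,\rho\in(0,1)$, $\operatorname{Cons}(\delta,\rho)$ is the set of $x \in \mathbb{S}^{n-1}$ for which there exists $\lambda \in \mathbb{R}$ with $|x_i - \lambda| \le \rho/\sqrt{n}$ for at least $(1-\delta)n$ indices $i\in[n]$. *)

theory Defs
  imports "HOL-Analysis.Analysis"
begin

text \<open>Vectors in R^n are represented as functions nat => real; only the
coordinates i < n (i.e. indices 0..n-1, standing for [n]) matter.\<close>

definition unit_sphere :: "nat \<Rightarrow> (nat \<Rightarrow> real) set" where
  "unit_sphere n = {x. (\<Sum>i<n. (x i)\<^sup>2) = 1}"

definition Cons_vec :: "nat \<Rightarrow> real \<Rightarrow> real \<Rightarrow> (nat \<Rightarrow> real) set" where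
  "Cons_vec n \<delta> \<rho> = {x \<in> unit_sphere n. \<exists>c::real.
      real (card {i \<in> {..<n}. \<bar>x i - c\<bar> \<le> \<rho> / sqrt (real n)}) \<ge> (1 - \<delta>) * real n}"

end

theory Submission
  imports Defs
begin

text \<open>Rescale \<open>x\<close> to \<open>y = sqrt n * x\<close>, so that \<open>\<Sum> y\<^sub>i\<^sup>2 = n\<close> and no interval of radius \<open>\<rho>\<close>
  contains \<open>(1 - \<delta>) n\<close> coordinates. Sort \<open>\<bar>y\<^sub>i\<bar>\<close> into bins of width \<open>h = \<rho>/3\<close> up to \<open>N h\<close>;
  by Chebyshev all but \<open>\<delta> n/4\<close> coordinates lie below \<open>N h\<close>, and as \<open>(N + 1) \<nu> n = \<delta> n/4\<close>
  the light bins (fewer than \<open>\<nu> n\<close> coordinates) carry little mass together. Hence some bin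
  beyond \<open>3 h\<close> is heavy, since \<open>[-3h, 3h]\<close> holds fewer than \<open>(1 - \<delta>) n\<close> coordinates.
  If two heavy bins are separated by a gap, or \<open>[0, h]\<close> is heavy as well, alternative (1)
  holds with a gap of width \<open>h\<close>. Otherwise nearly all coordinates satisfy
  \<open>j h < \<bar>y\<^sub>i\<bar> \<le> (j + 2) h\<close> for the first heavy bin \<open>j\<close>; as neither this band nor its mirror
  image holds \<open>(1 - \<delta>) n\<close> coordinates, both carry at least \<open>\<nu> n\<close>, which is alternative (2).\<close>

lemma card_le_split:
  fixes f :: "'a \<Rightarrow> real"
  assumes "finite A" "s \<le> t"
  shows "card {i\<in>A. f i \<le> t} = card {i\<in>A. f i \<le> s} + card {i\<in>A. s < f i \<and> f i \<le> t}"
proof -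
  have "{i\<in>A. f i \<le> t} = {i\<in>A. f i \<le> s} \<union> {i\<in>A. s < f i \<and> f i \<le> t}"
    using assms(2) by auto
  then show ?thesis
    using assms(1) by (simp add: card_Un_disjoint disjoint_iff)
qed

lemma card_le_telescope:
  fixes f :: "'a \<Rightarrow> real" and t :: "nat \<Rightarrow> real"
  assumes "finite A" "mono t" "a \<le> b"
  shows "card {i\<in>A. f i \<le> t b} =
    card {i\<in>A. f i \<le> t a} + (\<Sum>j\<in>{a..<b}. card {i\<in>A. t j < f i \<and> f i \<le> t (Suc j)})"
  using assms(3)
proof (induction b rule: dec_induct)
  case base
  then show ?case by simp
next
  case (step b)
  have "t b \<le> t (Suc b)"
    using assms(2) by (simp add: monoD)
  then show ?case
    using step card_le_split[OF assms(1)] by simp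
qed

lemma card_abs_le_ge_of_sum_sq:
  fixes y :: "'a \<Rightarrow> real"
  assumes "finite A" "0 < M"
  shows "real (card A) - (\<Sum>i\<in>A. (y i)\<^sup>2) / M\<^sup>2 \<le> real (card {i\<in>A. \<bar>y i\<bar> \<le> M})"
proof -
  let ?large = "{i\<in>A. M < \<bar>y i\<bar>}"
  have "real (card ?large) * M\<^sup>2 = (\<Sum>i\<in>?large. M\<^sup>2)"
    by simp
  also have "\<dots> \<le> (\<Sum>i\<in>?large. (y i)\<^sup>2)"
  proof (rule sum_mono)
    fix i
    assume "i \<in> ?large"
    then have "M\<^sup>2 \<le> \<bar>y i\<bar>\<^sup>2"
      using assms(2) by (intro power_mono) auto
    then show "M\<^sup>2 \<le> (y i)\<^sup>2"
      by simp
  qed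
  also have "\<dots> \<le> (\<Sum>i\<in>A. (y i)\<^sup>2)"
    using assms(1) by (intro sum_mono2) auto
  finally have "real (card ?large) \<le> (\<Sum>i\<in>A. (y i)\<^sup>2) / M\<^sup>2"
    using assms(2) by (simp add: pos_le_divide_eq)
  moreover have "card A = card {i\<in>A. \<bar>y i\<bar> \<le> M} + card ?large"
    using assms(1) by (subst card_Un_disjoint[symmetric]) (auto intro: arg_cong[where f = card])
  ultimately show ?thesis
    by simp
qed

lemma card_abs_band_split:
  fixes y :: "'a \<Rightarrow> real"
  assumes "finite A" "0 \<le> a"
  shows "card {i\<in>A. a < \<bar>y i\<bar> \<and> \<bar>y i\<bar> \<le> b} =
    card {i\<in>A. a < y i \<and> y i \<le> b} + card {i\<in>A. - b \<le> y i \<and> y i < - a}"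
proof -
  have "{i\<in>A. a < \<bar>y i\<bar> \<and> \<bar>y i\<bar> \<le> b} =
      {i\<in>A. a < y i \<and> y i \<le> b} \<union> {i\<in>A. - b \<le> y i \<and> y i < - a}"
    using assms(2) by auto
  then show ?thesis
    using assms by (simp add: card_Un_disjoint disjoint_iff)
qed

text \<open>Here \<open>y\<close> stands for the rescaled vector \<open>sqrt n * x\<close>, \<open>h\<close> is the width of the bins
  \<open>(j h, (j + 1) h]\<close> for \<open>\<bar>y i\<bar>\<close>, and a bin is heavy if it holds at least \<open>m = \<nu> n\<close> coordinates.\<close>

locale spread_bins =
  fixes n :: nat and y :: "nat \<Rightarrow> real" and \<delta> h m :: real and N :: nat
  assumes h_pos: "0 < h"
    and m_pos: "0 < m"
    and not_concentrated: "\<And>c. real (card {i\<in>{..<n}. \<bar>y i - c\<bar> \<le> 3 * h}) < (1 - \<delta>) * real n"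
    and mostly_bounded: "real n - \<delta> * real n / 4 \<le> real (card {i\<in>{..<n}. \<bar>y i\<bar> \<le> real N * h})"
    and light_threshold: "real N * m + m \<le> \<delta> * real n / 4"
begin

abbreviation count_le :: "real \<Rightarrow> real" where
  "count_le t \<equiv> real (card {i\<in>{..<n}. \<bar>y i\<bar> \<le> t})"

abbreviation count_in :: "real \<Rightarrow> real \<Rightarrow> real" where
  "count_in s t \<equiv> real (card {i\<in>{..<n}. s < \<bar>y i\<bar> \<and> \<bar>y i\<bar> \<le> t})"

abbreviation bin :: "nat \<Rightarrow> real" where
  "bin j \<equiv> count_in (real j * h) (real (Suc j) * h)"

lemma count_le_mono: "s \<le> t \<Longrightarrow> count_le s \<le> count_le t"
  by (intro of_nat_mono card_mono) auto

lemma count_le_split: "s \<le> t \<Longrightarrow> count_le t = count_le s + count_in s t"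
  using card_le_split[of "{..<n}" s t "\<lambda>i. \<bar>y i\<bar>"] by simp

lemma count_in_mono: "s' \<le> s \<Longrightarrow> t \<le> t' \<Longrightarrow> count_in s t \<le> count_in s' t'"
  by (intro of_nat_mono card_mono) auto

lemma count_le_le_of_light_bins:
  assumes "\<And>j. a \<le> j \<Longrightarrow> j < b \<Longrightarrow> bin j < m"
  shows "count_le (real b * h) \<le> count_le (real a * h) + real (b - a) * m"
proof (cases "a \<le> b")
  case True
  have "mono (\<lambda>j. real j * h)"
    using h_pos by (intro monoI) simp
  then have "count_le (real b * h) = count_le (real a * h) + (\<Sum>j\<in>{a..<b}. bin j)"
    using card_le_telescope[of "{..<n}" "\<lambda>j. real j * h" a b "\<lambda>i. \<bar>y i\<bar>"] True by simp
  also have "(\<Sum>j\<in>{a..<b}. bin j) \<le> real (b - a) * m"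
    using sum_bounded_above[of "{a..<b}" bin m] assms by (simp add: less_imp_le)
  finally show ?thesis
    by simp
next
  case False
  then show ?thesis
    using h_pos m_pos count_le_mono[of "real b * h" "real a * h"] by simp
qed

lemma heavy_bin_beyond_three: "\<exists>j. 3 \<le> j \<and> j < N \<and> m \<le> bin j"
proof (rule ccontr)
  assume "\<not> ?thesis"
  then have "count_le (real N * h) \<le> count_le (3 * h) + real (N - 3) * m"
    using count_le_le_of_light_bins[of 3 N] by force
  moreover have "count_le (3 * h) < real n - \<delta> * real n"
    using not_concentrated[of 0] by (simp add: algebra_simps)
  moreover have "real (N - 3) * m \<le> real N * m"
    using m_pos by (intro mult_right_mono) auto
  moreover have "0 \<le> real N * m"
    using m_pos by simp
  ultimately show False
    using mostly_bounded light_threshold m_pos by linarith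
qed

lemma two_sided_of_heavy_band:
  assumes "0 \<le> a" "(1 - \<delta>) * real n + m \<le> count_in a (a + 2 * h)"
  shows "m \<le> real (card {i\<in>{..<n}. a < y i \<and> y i < a + 3 * h})"
    and "m \<le> real (card {i\<in>{..<n}. - (a + 3 * h) < y i \<and> y i < - a})"
proof -
  let ?pos = "real (card {i\<in>{..<n}. a < y i \<and> y i \<le> a + 2 * h})"
  let ?neg = "real (card {i\<in>{..<n}. - (a + 2 * h) \<le> y i \<and> y i < - a})"
  have split: "count_in a (a + 2 * h) = ?pos + ?neg"
    using card_abs_band_split[of "{..<n}" a y "a + 2 * h"] assms(1) by simp
  have "?pos \<le> real (card {i\<in>{..<n}. \<bar>y i - (a + h)\<bar> \<le> 3 * h})"
    using h_pos by (intro of_nat_mono card_mono) auto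
  then have pos: "?pos < (1 - \<delta>) * real n"
    using not_concentrated by (rule le_less_trans)
  have "?neg \<le> real (card {i\<in>{..<n}. \<bar>y i - - (a + h)\<bar> \<le> 3 * h})"
    using h_pos by (intro of_nat_mono card_mono) auto
  then have neg: "?neg < (1 - \<delta>) * real n"
    using not_concentrated by (rule le_less_trans)
  have "?pos \<le> real (card {i\<in>{..<n}. a < y i \<and> y i < a + 3 * h})"
    using h_pos by (intro of_nat_mono card_mono) auto
  then show "m \<le> real (card {i\<in>{..<n}. a < y i \<and> y i < a + 3 * h})"
    using split neg assms(2) by linarith
  have "?neg \<le> real (card {i\<in>{..<n}. - (a + 3 * h) < y i \<and> y i < - a})"
    using h_pos by (intro of_nat_mono card_mono) auto
  then show "m \<le> real (card {i\<in>{..<n}. - (a + 3 * h) < y i \<and> y i < - a})"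
    using split pos assms(2) by linarith
qed

lemma band_heavy_of_light_bins:
  assumes "1 \<le> j" "j < N" "count_le h < m"
    and "\<And>i. 1 \<le> i \<Longrightarrow> i < N \<Longrightarrow> i \<noteq> j \<Longrightarrow> i \<noteq> Suc j \<Longrightarrow> bin i < m"
  shows "(1 - \<delta>) * real n + m \<le> count_in (real j * h) (real j * h + 2 * h)"
proof -
  have "count_le (real j * h) \<le> count_le (real 1 * h) + real (j - 1) * m"
    by (rule count_le_le_of_light_bins) (use assms in auto)
  then have below: "count_le (real j * h) \<le> count_le h + real (j - 1) * m"
    by simp
  have above: "count_le (real N * h) \<le> count_le (real (j + 2) * h) + real (N - (j + 2)) * m"
    by (rule count_le_le_of_light_bins) (use assms in auto)
  have "real (j + 2) * h = real j * h + 2 * h"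
    by (simp add: algebra_simps)
  then have band: "count_le (real (j + 2) * h) = count_le (real j * h) + count_in (real j * h) (real j * h + 2 * h)"
    using count_le_split[of "real j * h" "real j * h + 2 * h"] h_pos by simp
  have "real (j - 1 + (N - (j + 2)) + 1) \<le> real N"
    using assms(1,2) by (subst of_nat_le_iff) linarith
  then have "(real (j - 1) + real (N - (j + 2)) + 1) * m \<le> real N * m"
    using m_pos by (intro mult_right_mono) auto
  then have "real (j - 1) * m + real (N - (j + 2)) * m + m \<le> real N * m"
    by (simp only: distrib_right mult_1)
  moreover have "0 \<le> real N * m"
    using m_pos by simp
  ultimately have "real n - \<delta> * real n + m \<le> count_in (real j * h) (real j * h + 2 * h)"
    using mostly_bounded light_threshold below above band assms(3) by linarith
  then show ?thesis
    by (simp add: algebra_simps)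
qed

abbreviation levels :: "real set" where
  "levels \<equiv> (\<lambda>j. real j * h) ` {1..N + 2}"

lemma gap_or_two_sided:
  "(\<exists>\<kappa>\<in>levels. \<exists>\<kappa>'\<in>levels. m \<le> count_le \<kappa> \<and> m \<le> count_in (\<kappa> + h) \<kappa>') \<or>
   (\<exists>\<kappa>\<in>levels. \<exists>\<kappa>'\<in>levels.
      m \<le> real (card {i\<in>{..<n}. \<kappa> < y i \<and> y i < \<kappa>'}) \<and>
      m \<le> real (card {i\<in>{..<n}. - \<kappa>' < y i \<and> y i < - \<kappa>}))"
proof -
  have level: "real j * h \<in> levels" if "1 \<le> j" "j \<le> N + 2" for j
    using that by auto
  define heavy where "heavy = {j. 1 \<le> j \<and> j < N \<and> m \<le> bin j}"
  obtain k where "k \<in> heavy" "3 \<le> k"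
    using heavy_bin_beyond_three unfolding heavy_def by auto
  have "finite heavy"
    unfolding heavy_def by (rule finite_subset[of _ "{..<N}"]) auto
  define jmin jmax where "jmin = Min heavy" and "jmax = Max heavy"
  have "jmin \<in> heavy" "jmax \<in> heavy"
    unfolding jmin_def jmax_def using \<open>finite heavy\<close> \<open>k \<in> heavy\<close> by (auto intro: Min_in Max_in)
  then have jmin: "1 \<le> jmin" "jmin < N" "m \<le> bin jmin" and jmax: "jmax < N" "m \<le> bin jmax"
    unfolding heavy_def by auto
  have "3 \<le> jmax"
    unfolding jmax_def using \<open>finite heavy\<close> \<open>k \<in> heavy\<close> \<open>3 \<le> k\<close> by (meson Max_ge le_trans)
  have light: "bin i < m" if "1 \<le> i" "i < N" "i < jmin \<or> jmax < i" for i
  proof (rule ccontr)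
    assume "\<not> bin i < m"
    with that have "i \<in> heavy"
      unfolding heavy_def by auto
    with that \<open>finite heavy\<close> show False
      unfolding jmin_def jmax_def by (meson Max_ge Min_le leD)
  qed
  consider (separated) "jmin + 2 \<le> jmax"
    | (near_origin) "jmax \<le> jmin + 1" "m \<le> count_le h"
    | (band) "jmax \<le> jmin + 1" "count_le h < m"
    by linarith
  then show ?thesis
  proof cases
    case separated
    have "real (jmin + 1) * h + h = real (jmin + 2) * h"
      by (simp add: algebra_simps)
    also have "\<dots> \<le> real jmax * h"
      using separated h_pos by (intro mult_right_mono) auto
    finally have "bin jmax \<le> count_in (real (jmin + 1) * h + h) (real (jmax + 1) * h)"
      by (intro count_in_mono) auto
    then have "m \<le> count_in (real (jmin + 1) * h + h) (real (jmax + 1) * h)"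
      using jmax by linarith
    moreover have "bin jmin \<le> count_le (real (jmin + 1) * h)"
      by (intro of_nat_mono card_mono) auto
    then have "m \<le> count_le (real (jmin + 1) * h)"
      using jmin by linarith
    moreover have "real (jmin + 1) * h \<in> levels" "real (jmax + 1) * h \<in> levels"
      using jmin jmax by (intro level; simp)+
    ultimately show ?thesis
      by blast
  next
    case near_origin
    have "2 * h \<le> real jmin * h"
      using near_origin \<open>3 \<le> jmax\<close> h_pos by simp
    then have "bin jmin \<le> count_in (h + h) (real (jmin + 1) * h)"
      by (intro count_in_mono) auto
    then have "m \<le> count_in (h + h) (real (jmin + 1) * h)"
      using jmin by linarith
    moreover have "h \<in> levels"
      using level[of 1] by simp
    moreover have "real (jmin + 1) * h \<in> levels"
      using jmin by (intro level) auto
    ultimately show ?thesis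
      using near_origin by blast
  next
    case band
    have "(1 - \<delta>) * real n + m \<le> count_in (real jmin * h) (real jmin * h + 2 * h)"
      using jmin band by (intro band_heavy_of_light_bins light) auto
    then have "m \<le> real (card {i\<in>{..<n}. real jmin * h < y i \<and> y i < real jmin * h + 3 * h})"
      and "m \<le> real (card {i\<in>{..<n}. - (real jmin * h + 3 * h) < y i \<and> y i < - (real jmin * h)})"
      using two_sided_of_heavy_band h_pos by auto
    moreover have "real jmin * h + 3 * h = real (jmin + 3) * h"
      by (simp add: algebra_simps)
    moreover have "real jmin * h \<in> levels" "real (jmin + 3) * h \<in> levels"
      using jmin by (intro level; simp)+
    ultimately show ?thesis
      by auto
  qed
qed

end

lemma sum_sq_scaled_unit_sphere:
  "x \<in> unit_sphere n \<Longrightarrow> (\<Sum>i<n. (sqrt (real n) * x i)\<^sup>2) = real n"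
  by (simp add: unit_sphere_def power_mult_distrib flip: sum_distrib_left)

lemma card_near_scaled_lt_of_not_Cons_vec:
  assumes "x \<in> unit_sphere n - Cons_vec n \<delta> \<rho>" "0 < n"
  shows "real (card {i\<in>{..<n}. \<bar>sqrt (real n) * x i - c\<bar> \<le> \<rho>}) < (1 - \<delta>) * real n"
proof -
  let ?s = "sqrt (real n)"
  have "0 < ?s"
    using assms(2) by simp
  then have "\<bar>?s * x i - c\<bar> = ?s * \<bar>x i - c / ?s\<bar>" for i
    by (simp add: abs_mult_pos' right_diff_distrib)
  with \<open>0 < ?s\<close> have "{i\<in>{..<n}. \<bar>?s * x i - c\<bar> \<le> \<rho>} = {i\<in>{..<n}. \<bar>x i - c / ?s\<bar> \<le> \<rho> / ?s}"
    by (simp add: pos_le_divide_eq mult.commute)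
  moreover have "\<not> (1 - \<delta>) * real n \<le> real (card {i\<in>{..<n}. \<bar>x i - c / ?s\<bar> \<le> \<rho> / ?s})"
    using assms(1) unfolding Cons_vec_def by auto
  ultimately show ?thesis
    by simp
qed

lemma spread_bins_rescaled:
  assumes "0 < \<delta>" "0 < \<rho>" "0 < n" "x \<in> unit_sphere n - Cons_vec n \<delta> \<rho>"
    and "2 / sqrt \<delta> \<le> real N * (\<rho> / 3)"
  shows "spread_bins n (\<lambda>i. sqrt (real n) * x i) \<delta> (\<rho> / 3) (\<delta> / (4 * (real N + 1)) * real n) N"
proof
  show "0 < \<rho> / 3" "0 < \<delta> / (4 * (real N + 1)) * real n"
    using assms(1-3) by simp_all
  show "real (card {i\<in>{..<n}. \<bar>sqrt (real n) * x i - c\<bar> \<le> 3 * (\<rho> / 3)}) < (1 - \<delta>) * real n" for c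
    using card_near_scaled_lt_of_not_Cons_vec[OF assms(4,3)] by simp
  have "(real N + 1) * (\<delta> / (4 * (real N + 1))) = \<delta> / 4"
    by (simp add: field_simps add_pos_nonneg)
  then show "real N * (\<delta> / (4 * (real N + 1)) * real n) + \<delta> / (4 * (real N + 1)) * real n \<le> \<delta> * real n / 4"
    by (metis distrib_right mult.assoc mult_1 order_refl times_divide_eq_left)
  let ?M = "real N * (\<rho> / 3)"
  have "0 < 2 / sqrt \<delta>"
    using assms(1) by simp
  then have "(2 / sqrt \<delta>)\<^sup>2 \<le> ?M\<^sup>2"
    using assms(5) by (intro power_mono) auto
  then have "4 / \<delta> \<le> ?M\<^sup>2"
    using assms(1) by (simp add: power_divide)
  then have "inverse (?M\<^sup>2) \<le> \<delta> / 4"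
    using assms(1) le_imp_inverse_le[of "4 / \<delta>" "?M\<^sup>2"] by simp
  then have "real n * inverse (?M\<^sup>2) \<le> real n * (\<delta> / 4)"
    by (rule mult_left_mono) simp
  then have "real n / ?M\<^sup>2 \<le> \<delta> * real n / 4"
    by (simp add: field_simps)
  moreover have "real n - real n / ?M\<^sup>2 \<le> real (card {i\<in>{..<n}. \<bar>sqrt (real n) * x i\<bar> \<le> ?M})"
    using card_abs_le_ge_of_sum_sq[of "{..<n}" ?M "\<lambda>i. sqrt (real n) * x i"]
      sum_sq_scaled_unit_sphere[of x n] assms(4) \<open>0 < 2 / sqrt \<delta>\<close> assms(5) by simp
  ultimately show "real n - \<delta> * real n / 4 \<le> real (card {i\<in>{..<n}. \<bar>sqrt (real n) * x i\<bar> \<le> ?M})"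
    by linarith
qed

lemma gap_or_two_sided_on_sphere:
  fixes x :: "nat \<Rightarrow> real"
  assumes "0 < \<delta>" "0 < \<rho>" "2 / sqrt \<delta> \<le> real N * (\<rho> / 3)"
    and "1 \<le> n" "x \<in> unit_sphere n - Cons_vec n \<delta> \<rho>"
  defines "\<nu> \<equiv> \<delta> / (4 * (real N + 1))" and "K \<equiv> (\<lambda>j. real j * (\<rho> / 3)) ` {1..N + 2}"
  shows "(\<exists>\<kappa>\<in>K. \<exists>\<kappa>'\<in>K.
         real (card {i \<in> {..<n}. \<bar>x i\<bar> \<le> \<kappa> / sqrt (real n)}) \<ge> \<nu> * real n \<and>
         real (card {i \<in> {..<n}. (\<kappa> + \<rho> / 3) / sqrt (real n) < \<bar>x i\<bar> \<and> \<bar>x i\<bar> \<le> \<kappa>' / sqrt (real n)}) \<ge> \<nu> * real n)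
      \<or>
      (\<exists>\<kappa>\<in>K. \<exists>\<kappa>'\<in>K.
         real (card {i \<in> {..<n}. \<kappa> / sqrt (real n) < x i \<and> x i < \<kappa>' / sqrt (real n)}) \<ge> \<nu> * real n \<and>
         real (card {i \<in> {..<n}. - \<kappa>' / sqrt (real n) < x i \<and> x i < - \<kappa> / sqrt (real n)}) \<ge> \<nu> * real n)"
proof -
  interpret spread_bins n "\<lambda>i. sqrt (real n) * x i" \<delta> "\<rho> / 3" "\<nu> * real n" N
    using spread_bins_rescaled[of \<delta> \<rho> n x N] assms unfolding \<nu>_def by simp
  let ?s = "sqrt (real n)"
  have "0 < ?s"
    using assms(4) by simp
  then have scale:
      "\<And>a. {i\<in>{..<n}. \<bar>x i\<bar> \<le> a / ?s} = {i\<in>{..<n}. \<bar>?s * x i\<bar> \<le> a}"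
      "\<And>a b. {i\<in>{..<n}. a / ?s < \<bar>x i\<bar> \<and> \<bar>x i\<bar> \<le> b / ?s} =
        {i\<in>{..<n}. a < \<bar>?s * x i\<bar> \<and> \<bar>?s * x i\<bar> \<le> b}"
      "\<And>a b. {i\<in>{..<n}. a / ?s < x i \<and> x i < b / ?s} = {i\<in>{..<n}. a < ?s * x i \<and> ?s * x i < b}"
    by (auto simp: abs_mult pos_le_divide_eq pos_divide_less_eq pos_less_divide_eq mult.commute)
  show ?thesis
    unfolding K_def scale using gap_or_two_sided .
qed

theorem lemma2p3:
  fixes \<delta> \<rho> :: real
  assumes "0 < \<delta>" "\<delta> < 1/4" "0 < \<rho>" "\<rho> < 1/4"
  shows "\<exists>\<nu> \<nu>' :: real. \<exists>K :: real set. \<nu> > 0 \<and> \<nu>' > 0 \<and> finite K \<and> (\<forall>k\<in>K. k > 0) \<and>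
    (\<forall>n::nat. \<forall>x. n \<ge> 1 \<longrightarrow> x \<in> unit_sphere n - Cons_vec n \<delta> \<rho> \<longrightarrow>
      (\<exists>\<kappa>\<in>K. \<exists>\<kappa>'\<in>K.
         real (card {i \<in> {..<n}. \<bar>x i\<bar> \<le> \<kappa> / sqrt (real n)}) \<ge> \<nu> * real n \<and>
         real (card {i \<in> {..<n}. (\<kappa> + \<nu>') / sqrt (real n) < \<bar>x i\<bar> \<and> \<bar>x i\<bar> \<le> \<kappa>' / sqrt (real n)}) \<ge> \<nu> * real n)
      \<or>
      (\<exists>\<kappa>\<in>K. \<exists>\<kappa>'\<in>K.
         real (card {i \<in> {..<n}. \<kappa> / sqrt (real n) < x i \<and> x i < \<kappa>' / sqrt (real n)}) \<ge> \<nu> * real n \<and>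
         real (card {i \<in> {..<n}. - \<kappa>' / sqrt (real n) < x i \<and> x i < - \<kappa> / sqrt (real n)}) \<ge> \<nu> * real n))"
proof -
  obtain N :: nat where "2 / sqrt \<delta> / (\<rho> / 3) \<le> real N"
    using real_arch_simple by blast
  moreover have "0 < \<rho> / 3"
    using assms(3) by simp
  ultimately have N: "2 / sqrt \<delta> \<le> real N * (\<rho> / 3)"
    by (simp only: pos_divide_le_eq)
  let ?K = "(\<lambda>j. real j * (\<rho> / 3)) ` {1..N + 2}"
  have "0 < \<delta> / (4 * (real N + 1))" "0 < \<rho> / 3" "finite ?K" "\<forall>\<kappa>\<in>?K. 0 < \<kappa>"
    using assms(1,3) by auto
  then show ?thesis
    using gap_or_two_sided_on_sphere[OF assms(1,3) N]
    by (intro exI[of _ "\<delta> / (4 * (real N + 1))"] exI[of _ "\<rho> / 3"] exI[of _ ?K]) blast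
qed

end
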